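(* Let $a,b$ be integers with $0<b<a$, let $S=\langle a,a+1,\ldots,a+b\rangle$ with conductor $c$, and let $m\ge 2c-1$. Let $0=i_0<i_1<\cdots<i_t<a+b$ be integers. Then $$\sharp\mathrm D(m,m+i_1,\ldots,m+i_t)\ge\sharp\mathrm D(m,m+1,\ldots,m+t).$$
   Context: The conductor $c$ of a numerical semigroup $S$ is the least element of $S$ with $c+n\in S$ for all $n\in\mathbb N$. For $x\in S$, $\mathrm D(x)=\{\alpha\in S\mid x-\alpha\in S\}$, and $\mathrm D(x_1,\ldots,x_t)=\mathrm D(x_1)\cup\cdots\cup\mathrm D(x_t)$. *)

theory Defs
  imports Main
begin

inductive_set monoid_gen :: "nat set \<Rightarrow> nat set" for G :: "nat set" where
  zero: "0 \<in> monoid_gen G"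
| add: "g \<in> G \<Longrightarrow> x \<in> monoid_gen G \<Longrightarrow> g + x \<in> monoid_gen G"

definition interval_semigroup :: "nat \<Rightarrow> nat \<Rightarrow> nat set" where
  "interval_semigroup a b = monoid_gen {a..a+b}"

definition conductor :: "nat set \<Rightarrow> nat" where
  "conductor S = (LEAST c. c \<in> S \<and> (\<forall>n. c + n \<in> S))"

text \<open>D(x) = {alpha in S | x - alpha in S} (integer subtraction, so alpha <= x).\<close>
definition Dset :: "nat set \<Rightarrow> nat \<Rightarrow> nat set" where
  "Dset S x = {\<alpha> \<in> S. \<alpha> \<le> x \<and> x - \<alpha> \<in> S}"

definition Dmulti :: "nat set \<Rightarrow> nat set \<Rightarrow> nat set" where
  "Dmulti S X = (\<Union>x\<in>X. Dset S x)"

end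

theory Submission
  imports Defs
begin

text \<open>Count inside \<open>[0, m + K]\<close> with \<open>K = i t\<close>. An element \<open>x\<close> of \<open>S\<close> fails to lie in
  \<open>D(m + i\<^sub>0, \<dots>, m + i\<^sub>t)\<close> exactly when all \<open>m + i\<^sub>k - x\<close> are gaps, i.e. when the reflection
  \<open>m + K - x\<close> lies in the set of \<open>y\<close> all of whose translates \<open>y - (K - i\<^sub>k)\<close> are gaps; as
  \<open>m \<ge> 2c - 1\<close>, this reflection is a bijection onto that set. Passing from the shifts \<open>i\<^sub>k\<close> to
  \<open>0, \<dots>, t\<close> loses \<open>K - t\<close> elements of \<open>S\<close> from the window, and the gaps of \<open>S\<close> form rows
  (\<open>q (a + b) + r\<close> is a gap iff \<open>0 < r < a - q b\<close>), which yields an injection showing that the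
  set of such \<open>y\<close> shrinks by at most \<open>K - t\<close>.\<close>

lemma mem_interval_semigroup_iff:
  "z \<in> interval_semigroup a b \<longleftrightarrow> (\<exists>n. n * a \<le> z \<and> z \<le> n * (a + b))"
proof
  assume "z \<in> interval_semigroup a b"
  then show "\<exists>n. n * a \<le> z \<and> z \<le> n * (a + b)"
    unfolding interval_semigroup_def
  proof (induction rule: monoid_gen.induct)
    case zero
    show ?case by auto
  next
    case (add g x)
    then obtain n where "n * a \<le> x" "x \<le> n * (a + b)" by auto
    with add.hyps(1) have "Suc n * a \<le> g + x \<and> g + x \<le> Suc n * (a + b)" by auto
    then show ?case by blast
  qed
next
  assume "\<exists>n. n * a \<le> z \<and> z \<le> n * (a + b)"
  then obtain n where "n * a \<le> z" "z \<le> n * (a + b)" by auto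
  then show "z \<in> interval_semigroup a b"
    unfolding interval_semigroup_def
  proof (induction n arbitrary: z)
    case 0
    then show ?case using monoid_gen.zero by simp
  next
    case (Suc n)
    \<comment> \<open>peel off one generator, as large as possible\<close>
    define g where "g = min (a + b) (z - n * a)"
    have g: "g \<in> {a..a + b}" and z: "g + (z - g) = z"
      using Suc.prems by (auto simp: g_def)
    have "z - g \<in> monoid_gen {a..a + b}"
      using Suc.prems by (intro Suc.IH) (auto simp: g_def min_def algebra_simps)
    from monoid_gen.add[OF g this] show ?case by (simp only: z)
  qed
qed

lemma not_mem_interval_semigroup_iff:
  assumes "r < a + b"
  shows "q * (a + b) + r \<notin> interval_semigroup a b \<longleftrightarrow> 0 < r \<and> r + q * b < a"
proof
  assume gap: "q * (a + b) + r \<notin> interval_semigroup a b"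
  have "r = 0 \<Longrightarrow> q * a \<le> q * (a + b) + r \<and> q * (a + b) + r \<le> q * (a + b)"
    and "a \<le> r + q * b \<Longrightarrow> Suc q * a \<le> q * (a + b) + r \<and> q * (a + b) + r \<le> Suc q * (a + b)"
    using assms by (auto simp: algebra_simps)
  with gap show "0 < r \<and> r + q * b < a"
    unfolding mem_interval_semigroup_iff by (metis gr0I not_le)
next
  assume r: "0 < r \<and> r + q * b < a"
  show "q * (a + b) + r \<notin> interval_semigroup a b"
  proof
    assume "q * (a + b) + r \<in> interval_semigroup a b"
    then obtain n where n: "n * a \<le> q * (a + b) + r" "q * (a + b) + r \<le> n * (a + b)"
      unfolding mem_interval_semigroup_iff by blast
    show False
    proof (cases "n \<le> q")
      case True
      then have "n * (a + b) \<le> q * (a + b)" by simp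
      with n(2) r show False by simp
    next
      case False
      then have "Suc q * a \<le> n * a" by (intro mult_le_mono1) simp
      with n(1) r show False by (simp add: algebra_simps)
    qed
  qed
qed

lemma not_mem_interval_semigroupD:
  assumes "z \<notin> interval_semigroup a b" "0 < a"
  shows "0 < z mod (a + b) \<and> z mod (a + b) + z div (a + b) * b < a"
  using assms not_mem_interval_semigroup_iff[of "z mod (a + b)" a b "z div (a + b)"]
  by (simp add: mult.commute)

lemma not_mem_interval_semigroup_less:
  assumes "z \<notin> interval_semigroup a b" "0 < a" "0 < b"
  shows "z < a * (a + b)"
proof -
  define q where "q = z div (a + b)"
  have "q * b < a"
    using not_mem_interval_semigroupD[OF assms(1,2)] by (simp add: q_def)
  moreover have "q \<le> q * b"
    using \<open>0 < b\<close> by simp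
  ultimately have "Suc q \<le> a" by linarith
  have "z = q * (a + b) + z mod (a + b)"
    unfolding q_def by (rule div_mult_mod_eq[symmetric])
  moreover have "z mod (a + b) < a + b"
    using \<open>0 < a\<close> by simp
  ultimately have "z < Suc q * (a + b)" by simp
  also have "\<dots> \<le> a * (a + b)"
    using \<open>Suc q \<le> a\<close> by (rule mult_le_mono1)
  finally show ?thesis .
qed

lemma finite_not_mem_interval_semigroup:
  assumes "0 < a" "0 < b"
  shows "finite (- interval_semigroup a b)"
  using not_mem_interval_semigroup_less[OF _ assms]
  by (meson ComplD finite_lessThan finite_subset lessThan_iff subsetI)

lemma mem_if_conductor_le:
  assumes "\<And>z. N \<le> z \<Longrightarrow> z \<in> S" "conductor S \<le> z"
  shows "z \<in> S"
proof -
  have "\<exists>c. c \<in> S \<and> (\<forall>n. c + n \<in> S)"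
    using assms(1) by (intro exI[of _ N]) auto
  then have "conductor S \<in> S \<and> (\<forall>n. conductor S + n \<in> S)"
    unfolding conductor_def by (rule LeastI_ex)
  then show ?thesis
    using assms(2) le_add_diff_inverse by metis
qed

definition gap_shifts :: "nat set \<Rightarrow> nat set \<Rightarrow> nat set" where
  "gap_shifts S J = {y. \<forall>j\<in>J. j \<le> y \<longrightarrow> y - j \<notin> S}"

lemma gap_shifts_subset_Compl: "0 \<in> J \<Longrightarrow> gap_shifts S J \<subseteq> - S"
  unfolding gap_shifts_def by force

lemma row_mem_gap_shifts:
  assumes "t < s" "s + q * b < a"
  shows "q * (a + b) + s \<in> gap_shifts (interval_semigroup a b) {0..t}"
  unfolding gap_shifts_def
proof (intro CollectI ballI impI)
  fix j assume "j \<in> {0..t}"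
  with assms have "q * (a + b) + s - j = q * (a + b) + (s - j)" "s - j < a + b"
    and "0 < s - j \<and> s - j + q * b < a"
    by auto
  then show "q * (a + b) + s - j \<notin> interval_semigroup a b"
    by (simp only: not_mem_interval_semigroup_iff)
qed

text \<open>If \<open>y = q (a + b) + r\<close>, then \<open>y - h\<close> lies between \<open>q a\<close> and \<open>q (a + b)\<close> for
  all \<open>h \<in> [r, r + q b]\<close>, so none of these \<open>h\<close> is a shift of \<open>y\<close> into a gap.\<close>
lemma gap_shifts_residue_segment_disjoint:
  assumes "y \<in> gap_shifts (interval_semigroup a b) J"
  shows "{y mod (a + b)..y mod (a + b) + y div (a + b) * b} \<inter> J = {}"
proof -
  define q r where "q = y div (a + b)" and "r = y mod (a + b)"
  have y: "y = q * a + q * b + r"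
    unfolding q_def r_def by (metis add_mult_distrib2 div_mult_mod_eq mult.commute)
  have "y - h \<in> interval_semigroup a b" if "r \<le> h" "h \<le> r + q * b" for h
    unfolding mem_interval_semigroup_iff
    using that by (intro exI[of _ q]) (simp add: y algebra_simps, linarith)
  moreover have "h \<le> y" if "h \<le> r + q * b" for h
    using that y by linarith
  ultimately show ?thesis
    using assms unfolding gap_shifts_def q_def[symmetric] r_def[symmetric] by auto
qed

lemma strict_mono_on_card_filter_le:
  fixes H :: "nat set"
  assumes "finite H"
  shows "strict_mono_on H (\<lambda>r. card {h\<in>H. h \<le> r})"
proof (rule strict_mono_onI)
  fix r r' assume "r \<in> H" "r' \<in> H" "r < r'"
  then have "{h\<in>H. h \<le> r} \<subset> {h\<in>H. h \<le> r'}"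
    by (auto simp: psubset_eq set_eq_iff intro: exI[of _ r'])
  with assms show "card {h\<in>H. h \<le> r} < card {h\<in>H. h \<le> r'}"
    by (intro psubset_card_mono) simp_all
qed

lemma card_filter_le_add_le_card:
  fixes H :: "nat set"
  assumes "finite H" "{r..r + n} \<subseteq> H"
  shows "card {h\<in>H. h \<le> r} + n \<le> card H"
proof -
  have "card {h\<in>H. h \<le> r} + n = card ({h\<in>H. h \<le> r} \<union> {r<..r + n})"
    using assms(1) by (subst card_Un_disjoint) auto
  also have "\<dots> \<le> card H"
    using assms by (intro card_mono) auto
  finally show ?thesis .
qed

lemma gap_shifts_low_residue:
  assumes "y \<in> gap_shifts (interval_semigroup a b) J" "J \<subseteq> {0..K}" "K \<in> J"
    and "K < y" "y mod (a + b) \<le> K"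
  defines "H \<equiv> {0..K} - J"
  shows "0 < y div (a + b)" and "y mod (a + b) \<in> H"
    and "card {h\<in>H. h \<le> y mod (a + b)} + y div (a + b) * b \<le> card H"
proof -
  define q r where "q = y div (a + b)" and "r = y mod (a + b)"
  have y: "y = q * (a + b) + r"
    unfolding q_def r_def by (rule div_mult_mod_eq[symmetric])
  show "0 < q"
    using assms(4,5) y unfolding r_def by (cases q) auto
  have segment: "{r..r + q * b} \<inter> J = {}"
    using gap_shifts_residue_segment_disjoint[OF assms(1)] by (simp add: q_def r_def)
  with assms(3,5) have "r + q * b < K"
    unfolding r_def by (metis atLeastAtMost_iff disjoint_iff not_le)
  with segment have segment_H: "{r..r + q * b} \<subseteq> H"
    unfolding H_def by auto
  then show "r \<in> H" by auto
  show "card {h\<in>H. h \<le> r} + q * b \<le> card H"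
    using segment_H by (intro card_filter_le_add_le_card) (simp_all add: H_def)
qed

text \<open>Elements with residue above \<open>K\<close> already avoid \<open>S\<close> under the shifts \<open>0..t\<close>; those with
  residue \<open>r \<le> K\<close> are moved one row down, to residue \<open>t + rank of r\<close> among the holes
  \<open>{0..K} - J\<close>; the rest are themselves holes.\<close>
lemma card_gap_shifts_le:
  fixes a b K t :: nat and J :: "nat set"
  assumes "0 < b" "b < a" "J \<subseteq> {0..K}" "0 \<in> J" "K \<in> J" "K < a + b" "card J = Suc t"
  shows "card (gap_shifts (interval_semigroup a b) J)
    \<le> card (gap_shifts (interval_semigroup a b) {0..t}) + (K - t)"
proof -
  define S P Y Y0 H where "S = interval_semigroup a b" and "P = a + b"
    and "Y = gap_shifts S J" and "Y0 = gap_shifts S {0..t}" and "H = {0..K} - J"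
  define rank where "rank r = card {h\<in>H. h \<le> r}" for r
  define A B C where "A = {y\<in>Y. K < y mod P}" and "B = {y\<in>Y. K < y \<and> y mod P \<le> K}"
    and "C = {y\<in>Y. y \<le> K}"
  define \<phi> where "\<phi> y = (y div P - 1) * P + (t + rank (y mod P))" for y
  have "0 < a"
    using assms(1,2) by simp
  have "t \<le> K"
    using card_mono[OF _ assms(3)] assms(7) by simp
  have "finite H" "card H = K - t"
    using assms(3,7) by (simp_all add: H_def card_Diff_subset finite_subset)
  have "finite Y0"
    using finite_not_mem_interval_semigroup[OF \<open>0 < a\<close> assms(1)] gap_shifts_subset_Compl[of "{0..t}"]
    unfolding Y0_def S_def by (meson atLeastAtMost_iff finite_subset le0)
  have gap: "y mod P + y div P * b < a" if "y \<in> Y" for y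
    using gap_shifts_subset_Compl[OF assms(4)] not_mem_interval_semigroupD[OF _ \<open>0 < a\<close>] that
    unfolding Y_def S_def P_def by blast
  have "A \<subseteq> Y0"
  proof
    fix y assume "y \<in> A"
    then have "t < y mod P" "y mod P + y div P * b < a"
      using \<open>t \<le> K\<close> gap by (auto simp: A_def)
    from row_mem_gap_shifts[OF this] show "y \<in> Y0"
      by (simp add: Y0_def S_def P_def[symmetric])
  qed
  have B_image: "\<phi> y \<in> Y0 \<and> \<phi> y div P = y div P - 1 \<and> \<phi> y mod P = t + rank (y mod P)
      \<and> \<phi> y mod P \<le> K \<and> 0 < y div P \<and> y mod P \<in> H" if "y \<in> B" for y
  proof -
    define q r s where "q = y div P" and "r = y mod P" and "s = t + rank r"
    have "y \<in> gap_shifts (interval_semigroup a b) J" "K < y" "y mod (a + b) \<le> K"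
      using that by (simp_all add: B_def Y_def S_def P_def)
    note low_residue = gap_shifts_low_residue[OF this(1) assms(3,5) this(2,3),
        folded H_def P_def q_def r_def]
    have "0 < rank r"
      unfolding rank_def using \<open>finite H\<close> low_residue(2) by (auto simp: card_gt_0_iff)
    then have "t < s" "s + q * b \<le> K"
      using low_residue(3) \<open>card H = K - t\<close> \<open>t \<le> K\<close> by (simp_all add: s_def rank_def)
    moreover obtain q' where "q = Suc q'"
      using low_residue(1) gr0_implies_Suc by blast
    ultimately have "s + (q - 1) * b < a" "s < P"
      using assms(6) by (simp_all add: P_def)
    then have "\<phi> y = (q - 1) * P + s" "\<phi> y mod P = s" "\<phi> y div P = q - 1"
      by (simp_all add: \<phi>_def q_def r_def s_def)
    with row_mem_gap_shifts[OF \<open>t < s\<close> \<open>s + (q - 1) * b < a\<close>]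
      \<open>s + q * b \<le> K\<close> low_residue(1,2) show ?thesis
      by (simp add: Y0_def S_def P_def q_def r_def s_def)
  qed
  have "inj_on \<phi> B"
  proof
    fix x y assume "x \<in> B" "y \<in> B" "\<phi> x = \<phi> y"
    with B_image[of x] B_image[of y] have "rank (x mod P) = rank (y mod P)"
      and "x div P = y div P"
      by auto
    moreover have "inj_on rank H"
      unfolding rank_def
      by (rule strict_mono_on_imp_inj_on[OF strict_mono_on_card_filter_le[OF \<open>finite H\<close>]])
    ultimately have "x mod P = y mod P"
      using B_image[OF \<open>x \<in> B\<close>] B_image[OF \<open>y \<in> B\<close>] by (simp add: inj_on_eq_iff)
    with \<open>x div P = y div P\<close> show "x = y"
      by (metis div_mult_mod_eq)
  qed
  have "A \<inter> \<phi> ` B = {}"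
    using B_image by (fastforce simp: A_def)
  have "C \<subseteq> H"
    using assms(3) mem_interval_semigroup_iff[of 0 a b]
    by (auto simp: C_def H_def Y_def S_def gap_shifts_def)
  have "Y = A \<union> B \<union> C"
    by (auto simp: A_def B_def C_def)
  then have "card Y \<le> card (A \<union> B) + card C"
    by (simp add: card_Un_le)
  also have "card (A \<union> B) \<le> card A + card B"
    by (rule card_Un_le)
  also have "card A + card B = card (A \<union> \<phi> ` B)"
    using \<open>A \<subseteq> Y0\<close> B_image \<open>finite Y0\<close> \<open>A \<inter> \<phi> ` B = {}\<close> \<open>inj_on \<phi> B\<close>
    by (subst card_Un_disjoint) (auto simp: card_image intro: finite_subset)
  also have "\<dots> \<le> card Y0"
    using \<open>A \<subseteq> Y0\<close> B_image \<open>finite Y0\<close> by (intro card_mono) auto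
  also have "card C \<le> card H"
    using \<open>C \<subseteq> H\<close> \<open>finite H\<close> by (rule card_mono[rotated])
  finally show ?thesis
    using \<open>card H = K - t\<close> by (simp add: Y_def Y0_def S_def)
qed

lemma mem_Dmulti_iff_gap_shifts:
  assumes "\<And>i. i \<in> I \<Longrightarrow> i \<le> K" "x \<le> m + K"
  shows "x \<in> Dmulti S ((+) m ` I) \<longleftrightarrow> x \<in> S \<and> m + K - x \<notin> gap_shifts S ((\<lambda>i. K - i) ` I)"
proof -
  have "K - i \<le> m + K - x \<longleftrightarrow> x \<le> m + i" "m + K - x - (K - i) = m + i - x" if "i \<in> I" for i
    using assms(1)[OF that] assms(2) by auto
  then show ?thesis
    unfolding Dmulti_def Dset_def gap_shifts_def by auto
qed

text \<open>Gap shifts lie below \<open>K + c\<close> (as \<open>K - 0\<close> is a shift), so their reflections \<open>m + K - y\<close> are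
  at least \<open>c\<close>, hence in \<open>S\<close>: the reflection identifies them with \<open>S \<inter> [0, m + K]\<close> minus
  the \<open>D\<close>-set.\<close>
lemma card_Dmulti_add_card_gap_shifts:
  assumes "\<And>z. c \<le> z \<Longrightarrow> z \<in> S" "2 * c \<le> m + 1" "0 \<in> I" "\<And>i. i \<in> I \<Longrightarrow> i \<le> K"
  shows "card (Dmulti S ((+) m ` I)) + card (gap_shifts S ((\<lambda>i. K - i) ` I))
    = card (S \<inter> {..m + K})"
proof -
  define D Y where "D = Dmulti S ((+) m ` I)" and "Y = gap_shifts S ((\<lambda>i. K - i) ` I)"
  have Y_bound: "y < K + c" if "y \<in> Y" for y
  proof -
    have "K \<le> y \<longrightarrow> y - K \<notin> S"
      using that assms(3) unfolding Y_def gap_shifts_def by force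
    then show ?thesis
      using assms(1)[of "y - K"] by linarith
  qed
  then have "finite Y"
    by (meson finite_lessThan finite_subset lessThan_iff subsetI)
  have reflect_Y: "m + K - y \<le> m + K \<and> m + K - y \<in> S \<and> m + K - (m + K - y) = y" if "y \<in> Y" for y
    using Y_bound[OF that] assms(1)[of "m + K - y"] assms(2) by auto
  have "D \<subseteq> {..m + K}"
    using assms(4) unfolding D_def Dmulti_def Dset_def by fastforce
  then have D_eq: "D = {x \<in> S \<inter> {..m + K}. m + K - x \<notin> Y}"
    using mem_Dmulti_iff_gap_shifts[of I K _ m S, OF assms(4)] unfolding D_def Y_def by blast
  have "S \<inter> {..m + K} = D \<union> (\<lambda>y. m + K - y) ` Y"
  proof (intro equalityI subsetI)
    fix x assume x: "x \<in> S \<inter> {..m + K}"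
    show "x \<in> D \<union> (\<lambda>y. m + K - y) ` Y"
    proof (cases "m + K - x \<in> Y")
      case True
      moreover have "x = m + K - (m + K - x)"
        using x by simp
      ultimately show ?thesis by blast
    qed (use x D_eq in blast)
  qed (use reflect_Y D_eq in auto)
  moreover have "D \<inter> (\<lambda>y. m + K - y) ` Y = {}"
    using reflect_Y unfolding D_eq by auto
  moreover have "inj_on (\<lambda>y. m + K - y) Y"
    by (rule inj_on_inverseI[of _ "\<lambda>y. m + K - y"]) (use reflect_Y in blast)
  ultimately show ?thesis
    using \<open>finite Y\<close> \<open>D \<subseteq> {..m + K}\<close> finite_subset[OF \<open>D \<subseteq> {..m + K}\<close>]
    by (simp add: card_Un_disjoint card_image D_def Y_def)
qed

lemma card_Int_atMost_add:
  assumes "\<And>z. c \<le> z \<Longrightarrow> z \<in> S" "c \<le> Suc n"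
  shows "card (S \<inter> {..n + k}) = card (S \<inter> {..n}) + k"
proof -
  have "S \<inter> {..n + k} = (S \<inter> {..n}) \<union> {n<..n + k}"
    using assms by auto
  also have "card \<dots> = card (S \<inter> {..n}) + k"
    by (subst card_Un_disjoint) auto
  finally show ?thesis .
qed

lemma strict_mono_on_atMost_Suc:
  fixes f :: "nat \<Rightarrow> 'a::order"
  assumes "\<And>k. k < t \<Longrightarrow> f k < f (Suc k)"
  shows "strict_mono_on {..t} f"
proof (rule strict_mono_onI)
  fix k l assume "k \<in> {..t}" "l \<in> {..t}" "k < l"
  then show "f k < f l"
  proof (induction l)
    case (Suc l)
    then show ?case
      using assms[of l] by (cases "k = l") (auto intro: less_trans)
  qed simp
qed

lemma strict_mono_image_atLeast0AtMost:
  fixes i :: "nat \<Rightarrow> nat"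
  assumes "\<And>k. k < t \<Longrightarrow> i k < i (Suc k)"
  shows "i ` {0..t} \<subseteq> {0..i t}" and "card (i ` {0..t}) = Suc t"
proof -
  have mono: "strict_mono_on {0..t} i"
    using strict_mono_on_atMost_Suc[of t i, OF assms] by (simp add: atLeast0AtMost)
  show "i ` {0..t} \<subseteq> {0..i t}"
    using strict_mono_on_leD[OF mono] by auto
  show "card (i ` {0..t}) = Suc t"
    using strict_mono_on_imp_inj_on[OF mono] by (simp add: card_image)
qed

lemma image_diff_atLeast0AtMost: "(\<lambda>x. t - x) ` {0..t} = {0..t::nat}"
proof (intro equalityI subsetI)
  fix x assume "x \<in> {0..t}"
  then show "x \<in> (\<lambda>x. t - x) ` {0..t}"
    by (intro image_eqI[of _ _ "t - x"]) auto
qed auto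

theorem lemma4p12:
  fixes a b m t :: nat and i :: "nat \<Rightarrow> nat"
  assumes "0 < b" and "b < a"
    and "m \<ge> 2 * conductor (interval_semigroup a b) - 1"
    and "i 0 = 0"
    and "\<And>k. k < t \<Longrightarrow> i k < i (Suc k)"
    and "i t < a + b"
  shows "card (Dmulti (interval_semigroup a b) ((\<lambda>k. m + i k) ` {0..t}))
       \<ge> card (Dmulti (interval_semigroup a b) ((\<lambda>k. m + k) ` {0..t}))"
proof -
  define S c I K where "S = interval_semigroup a b" and "c = conductor S"
    and "I = i ` {0..t}" and "K = i t"
  have S_above: "z \<in> S" if "c \<le> z" for z
    using mem_if_conductor_le[of "a * (a + b)" S z] not_mem_interval_semigroup_less[of _ a b]
      assms(1,2) that unfolding S_def c_def by fastforce
  have "2 * c \<le> m + 1"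
    using assms(3) unfolding S_def c_def by linarith
  have I: "I \<subseteq> {0..K}" "card I = Suc t" "0 \<in> I" "K \<in> I"
    using strict_mono_image_atLeast0AtMost[of t i, OF assms(5)] assms(4) by (auto simp: I_def K_def)
  moreover have "inj_on (\<lambda>x. K - x) I"
    using I(1) by (intro inj_onI) (metis atLeastAtMost_iff diff_diff_cancel subsetD)
  ultimately have "t \<le> K" and "card ((\<lambda>x. K - x) ` I) = Suc t"
    using card_mono[of "{0..K}" I] by (simp_all add: card_image)
  then have "card (gap_shifts S ((\<lambda>x. K - x) ` I)) \<le> card (gap_shifts S {0..t}) + (K - t)"
    unfolding S_def using I assms(6)
    by (intro card_gap_shifts_le[OF assms(1,2)]) (auto simp: K_def image_iff intro: bexI[of _ 0])
  moreover have "card (Dmulti S ((+) m ` I)) + card (gap_shifts S ((\<lambda>x. K - x) ` I))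
      = card (S \<inter> {..m + K})"
    using I by (intro card_Dmulti_add_card_gap_shifts[OF S_above \<open>2 * c \<le> m + 1\<close>]) auto
  moreover have "card (Dmulti S ((+) m ` {0..t})) + card (gap_shifts S {0..t})
      = card (S \<inter> {..m + t})"
    using card_Dmulti_add_card_gap_shifts[OF S_above \<open>2 * c \<le> m + 1\<close>, of "{0..t}" t]
    by (simp add: image_diff_atLeast0AtMost)
  moreover have "card (S \<inter> {..m + K}) = card (S \<inter> {..m + t}) + (K - t)"
    using card_Int_atMost_add[OF S_above, where n = "m + t" and k = "K - t"]
      \<open>2 * c \<le> m + 1\<close> \<open>t \<le> K\<close> by simp
  ultimately show ?thesis
    by (simp add: S_def I_def image_image)
qed

end
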